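(* Let $\mathcal{A}$ be an association scheme with splitting field $L$ and Krein field $K$, and let $\sigma\in\mathrm{Gal}(L/\mathbb{Q})$. Then the map $\hat\sigma$ on $L[\mathcal{A}]$, defined by $M^{\hat\sigma}=\sum_ja_jE_j^\sigma$ for $M=\sum_ja_jE_j$, is a Bose–Mesner algebra automorphism of $L[\mathcal{A}]$ if and only if $\sigma$ fixes every element of $K$, i.e. $\sigma\in\mathrm{Gal}(L/K)$.
   Context: An association scheme on $v$ vertices is a set $\mathcal{A}=\{A_0,\ldots,A_d\}$ of $v\times v$ $(0,1)$-matrices with $A_0=I$, $\sum_iA_i=J$, closed under transpose, pairwise commuting, and with all products $A_iA_j$ in the span of $\mathcal{A}$. Its principal idempotents are the pairwise orthogonal Hermitian idempotents $E_0,\ldots,E_d$ summing to $I$ that form a basis of the span, with $A_iE_j=p_i(j)E_j$; the splitting field is $L=\mathbb{Q}(p_i(j):i,j)$ and $L[\mathcal{A}]$ is the $L$-span of $\mathcal{A}$. The Krein parameters $q_{ij}(k)$ are defined by $E_i\circ E_j=\frac1v\sum_kq_{ij}(k)E_k$ ($\circ$ the Schur product), and the Krein field $K$ is $\mathbb{Q}$ adjoined all Krein parameters (it is a subfield of $L$). For $\sigma\in\mathrm{Gal}(L/\mathbb{Q})$, $M^\sigma$ denotes entrywise application of $\sigma$; it permutes $\{E_0,\ldots,E_d\}$. A Bose–Mesner algebra automorphism of $L[\mathcal{A}]$ is an invertible $L$-linear map $\psi$ with $(MN)^\psi=M^\psi N^\psi$, $(M\circ N)^\psi=M^\psi\circ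 N^\psi$ and $(M^* )^\psi=(M^\psi)^*$. *)

theory Defs
  imports "HOL-Analysis.Analysis"
begin

type_synonym 'v cmat = "complex^'v^'v"

definition smat :: "complex \<Rightarrow> 'v::finite cmat \<Rightarrow> 'v::finite cmat" where
  "smat c M = (\<chi> i j. c * M $ i $ j)"

definition schur :: "'v::finite cmat \<Rightarrow> 'v::finite cmat \<Rightarrow> 'v::finite cmat" where
  "schur M N = (\<chi> i j. M $ i $ j * N $ i $ j)"

definition ctrans :: "'v::finite cmat \<Rightarrow> 'v::finite cmat" where
  "ctrans M = (\<chi> i j. cnj (M $ j $ i))"

definition Jmat :: "'v::finite cmat" where
  "Jmat = (\<chi> i j. 1)"

definition entrywise :: "(complex \<Rightarrow> complex) \<Rightarrow> 'v::finite cmat \<Rightarrow> 'v::finite cmat" where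
  "entrywise f M = (\<chi> i j. f (M $ i $ j))"

definition lincomb :: "nat \<Rightarrow> (nat \<Rightarrow> complex) \<Rightarrow> (nat \<Rightarrow> 'v::finite cmat) \<Rightarrow> 'v::finite cmat" where
  "lincomb d c M = (\<Sum>i\<le>d. smat (c i) (M i))"

definition assoc_scheme :: "nat \<Rightarrow> (nat \<Rightarrow> 'v::finite cmat) \<Rightarrow> bool" where
  "assoc_scheme d A \<longleftrightarrow>
     (\<forall>i\<le>d. \<forall>x y. A i $ x $ y \<in> {0, 1}) \<and>
     (\<forall>i\<le>d. A i \<noteq> 0) \<and>
     A 0 = mat 1 \<and>
     (\<Sum>i\<le>d. A i) = Jmat \<and>
     (\<forall>i\<le>d. \<exists>j\<le>d. transpose (A i) = A j) \<and>
     (\<forall>i\<le>d. \<forall>j\<le>d. A i ** A j = A j ** A i) \<and>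
     (\<forall>i\<le>d. \<forall>j\<le>d. \<exists>c. A i ** A j = lincomb d c A)"

definition principal_idempotents :: "nat \<Rightarrow> (nat \<Rightarrow> 'v::finite cmat) \<Rightarrow> (nat \<Rightarrow> 'v::finite cmat) \<Rightarrow> bool" where
  "principal_idempotents d A E \<longleftrightarrow>
     (\<forall>j\<le>d. E j ** E j = E j) \<and>
     (\<forall>i\<le>d. \<forall>j\<le>d. i \<noteq> j \<longrightarrow> E i ** E j = 0) \<and>
     (\<forall>j\<le>d. ctrans (E j) = E j) \<and>
     (\<Sum>j\<le>d. E j) = mat 1 \<and>
     (\<forall>j\<le>d. \<exists>c. E j = lincomb d c A) \<and>
     (\<forall>i\<le>d. \<exists>c. A i = lincomb d c E) \<and>
     (\<forall>c. lincomb d c E = 0 \<longrightarrow> (\<forall>j\<le>d. c j = 0))"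

definition subfield :: "complex set \<Rightarrow> bool" where
  "subfield F \<longleftrightarrow> 0 \<in> F \<and> 1 \<in> F \<and>
     (\<forall>x\<in>F. \<forall>y\<in>F. x + y \<in> F \<and> x * y \<in> F) \<and>
     (\<forall>x\<in>F. - x \<in> F \<and> inverse x \<in> F)"

definition gen_field :: "complex set \<Rightarrow> complex set" where
  "gen_field S = \<Inter>{F. subfield F \<and> S \<subseteq> F}"

definition field_aut :: "complex set \<Rightarrow> (complex \<Rightarrow> complex) \<Rightarrow> bool" where
  "field_aut L \<sigma> \<longleftrightarrow> bij_betw \<sigma> L L \<and> \<sigma> 1 = 1 \<and>
     (\<forall>x\<in>L. \<forall>y\<in>L. \<sigma> (x + y) = \<sigma> x + \<sigma> y \<and> \<sigma> (x * y) = \<sigma> x * \<sigma> y)"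

definition Lspan :: "complex set \<Rightarrow> nat \<Rightarrow> (nat \<Rightarrow> 'v::finite cmat) \<Rightarrow> 'v::finite cmat set" where
  "Lspan L d A = {M. \<exists>c. (\<forall>i\<le>d. c i \<in> L) \<and> M = lincomb d c A}"

definition coeffs :: "nat \<Rightarrow> (nat \<Rightarrow> 'v::finite cmat) \<Rightarrow> 'v::finite cmat \<Rightarrow> nat \<Rightarrow> complex" where
  "coeffs d E M = (THE a. (\<forall>j>d. a j = 0) \<and> M = lincomb d a E)"

definition hat :: "(complex \<Rightarrow> complex) \<Rightarrow> nat \<Rightarrow> (nat \<Rightarrow> 'v::finite cmat) \<Rightarrow> 'v::finite cmat \<Rightarrow> 'v::finite cmat" where
  "hat \<sigma> d E M = (\<Sum>j\<le>d. smat (coeffs d E M j) (entrywise \<sigma> (E j)))"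

definition BM_aut :: "complex set \<Rightarrow> 'v::finite cmat set \<Rightarrow> ('v::finite cmat \<Rightarrow> 'v::finite cmat) \<Rightarrow> bool" where
  "BM_aut L S \<psi> \<longleftrightarrow>
     bij_betw \<psi> S S \<and>
     (\<forall>M\<in>S. \<forall>N\<in>S. \<psi> (M + N) = \<psi> M + \<psi> N) \<and>
     (\<forall>c\<in>L. \<forall>M\<in>S. \<psi> (smat c M) = smat c (\<psi> M)) \<and>
     (\<forall>M\<in>S. \<forall>N\<in>S. \<psi> (M ** N) = \<psi> M ** \<psi> N) \<and>
     (\<forall>M\<in>S. \<forall>N\<in>S. \<psi> (schur M N) = schur (\<psi> M) (\<psi> N)) \<and>
     (\<forall>M\<in>S. \<psi> (ctrans M) = ctrans (\<psi> M))"

end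

theory Submission
  imports Defs
begin

text \<open>The principal idempotent E_j is a product over k \<noteq> j of factors
  (A_i - p_i(k) I) / (p_i(j) - p_i(k)), so its entries lie in L and \<sigma> can be applied to
  it entrywise. Because \<sigma> fixes the 0/1 matrices A_i, the matrices E_j^\<sigma> are again
  orthogonal idempotents of the Bose-Mesner algebra on which every A_i acts as a scalar,
  hence E_j^\<sigma> = E_\<pi>(j) for a permutation \<pi>. So \<sigma>-hat merely permutes the idempotent
  basis: it is bijective, L-linear, and preserves matrix products and conjugate transposes.
  Applying \<sigma> to the Krein relations gives E_i^\<sigma> \<circ> E_j^\<sigma> = (1/v) \<Sum>_k \<sigma>(q_ij(k)) E_k^\<sigma>,
  so by independence of the E_k^\<sigma>, \<sigma>-hat preserves Schur products exactly when \<sigma> fixes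
  every Krein parameter, i.e. the Krein field.\<close>

lemma matrix_mult_nth: "(X ** Y) $ x $ y = (\<Sum>k\<in>UNIV. X $ x $ k * Y $ k $ y)"
  by (simp add: matrix_matrix_mult_def)

lemma lincomb_nth: "lincomb d c M $ x $ y = (\<Sum>i\<le>d. c i * M i $ x $ y)"
  unfolding lincomb_def smat_def by simp

lemma smat_nth: "smat c M $ x $ y = c * M $ x $ y"
  unfolding smat_def by simp

lemma schur_nth: "schur M N $ x $ y = M $ x $ y * N $ x $ y"
  unfolding schur_def by simp

lemma ctrans_nth: "ctrans M $ x $ y = cnj (M $ y $ x)"
  unfolding ctrans_def by simp

lemma entrywise_nth: "entrywise f M $ x $ y = f (M $ x $ y)"
  unfolding entrywise_def by simp

lemma cmat_eqI: "(\<And>x y. (M::'v::finite cmat) $ x $ y = N $ x $ y) \<Longrightarrow> M = N"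
  by (simp add: vec_eq_iff)

lemma cmat_nonzero_entry:
  assumes "(M::'v::finite cmat) \<noteq> 0"
  obtains x y where "M $ x $ y \<noteq> 0"
  using assms by (auto simp: vec_eq_iff)

lemma smat_1: "smat 1 M = M"
  by (rule cmat_eqI) (simp add: smat_nth)

lemma smat_smat: "smat a (smat b M) = smat (a * b) M"
  by (rule cmat_eqI) (simp add: smat_nth)

lemma smat_add_left: "smat a M + smat b M = smat (a + b) M"
  by (rule cmat_eqI) (simp add: smat_nth distrib_right)

lemma smat_right_cancel: "smat a M = smat b M \<Longrightarrow> M \<noteq> 0 \<Longrightarrow> a = b"
  by (metis cmat_nonzero_entry mult_cancel_right smat_nth)

lemma smat_add_mult: "(smat r X + smat s Y) ** Z = smat r (X ** Z) + smat s (Y ** Z)"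
  by (rule cmat_eqI)
    (simp add: smat_nth matrix_mult_nth distrib_right sum.distrib sum_distrib_left mult.assoc)

lemma lincomb_cong:
  "(\<And>i. i \<le> d \<Longrightarrow> a i = b i) \<Longrightarrow> (\<And>i. i \<le> d \<Longrightarrow> X i = Y i) \<Longrightarrow>
    lincomb d a X = lincomb d b Y"
  unfolding lincomb_def by (rule sum.cong) auto

lemma lincomb_add: "lincomb d a X + lincomb d b X = lincomb d (\<lambda>i. a i + b i) X"
  by (rule cmat_eqI) (simp add: lincomb_nth sum.distrib[symmetric] distrib_right)

lemma smat_lincomb: "smat c (lincomb d a X) = lincomb d (\<lambda>i. c * a i) X"
  by (rule cmat_eqI) (simp add: lincomb_nth smat_nth sum_distrib_left mult.assoc)

lemma lincomb_smat: "lincomb d b (\<lambda>j. smat (a j) (X j)) = lincomb d (\<lambda>j. b j * a j) X"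
  by (rule cmat_eqI) (simp add: lincomb_nth smat_nth mult.assoc)

lemma lincomb_zero: "lincomb d (\<lambda>i. 0) X = 0"
  by (rule cmat_eqI) (simp add: lincomb_nth)

lemma sum_eq_lincomb_1: "(\<Sum>j\<le>d. X j) = lincomb d (\<lambda>_. 1) X"
  by (rule cmat_eqI) (simp add: lincomb_nth)

lemma lincomb_indicator: "j \<le> d \<Longrightarrow> lincomb d (\<lambda>i. if i = j then 1 else 0) X = X j"
  by (rule cmat_eqI) (simp add: lincomb_nth if_distrib[of "\<lambda>c. c * _"] cong: if_cong)

lemma lincomb_lincomb:
  "lincomb d c (\<lambda>i. lincomb d (r i) X) = lincomb d (\<lambda>k. \<Sum>i\<le>d. c i * r i k) X"
  by (rule cmat_eqI)
    (simp add: lincomb_nth sum_distrib_left sum_distrib_right mult.assoc, rule sum.swap)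

lemma lincomb_mult_right: "lincomb d a X ** Y = lincomb d a (\<lambda>i. X i ** Y)"
  by (rule cmat_eqI)
    (simp add: lincomb_nth matrix_mult_nth sum_distrib_right sum_distrib_left mult.assoc,
      rule sum.swap)

lemma lincomb_mult_left: "Y ** lincomb d a X = lincomb d a (\<lambda>i. Y ** X i)"
  by (rule cmat_eqI)
    (simp add: lincomb_nth matrix_mult_nth sum_distrib_right sum_distrib_left mult.left_commute,
      rule sum.swap)

lemma lincomb_mult_eigen:
  "(\<And>i. i \<le> d \<Longrightarrow> X i ** Y = smat (r i) Y) \<Longrightarrow>
    lincomb d c X ** Y = smat (\<Sum>i\<le>d. c i * r i) Y"
  unfolding lincomb_mult_right
  by (subst lincomb_cong[OF refl, where Y = "\<lambda>i. smat (r i) Y"])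
    (simp_all add: lincomb_smat, rule cmat_eqI, simp add: lincomb_nth smat_nth sum_distrib_right)

lemma ctrans_lincomb:
  assumes "\<And>i. i \<le> d \<Longrightarrow> ctrans (X i) = X i"
  shows "ctrans (lincomb d a X) = lincomb d (\<lambda>i. cnj (a i)) X"
proof (rule cmat_eqI)
  fix x y
  have "cnj (X i $ y $ x) = X i $ x $ y" if "i \<le> d" for i
    using assms[OF that] by (metis ctrans_nth)
  then show "ctrans (lincomb d a X) $ x $ y = lincomb d (\<lambda>i. cnj (a i)) X $ x $ y"
    by (simp add: lincomb_nth ctrans_nth)
qed

lemma schur_lincomb:
  assumes "\<And>i j. i \<le> d \<Longrightarrow> j \<le> d \<Longrightarrow> schur (X i) (X j) = smat w (lincomb d (Q i j) X)"
  shows "schur (lincomb d a X) (lincomb d b X) =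
     lincomb d (\<lambda>k. \<Sum>i\<le>d. \<Sum>j\<le>d. a i * b j * (w * Q i j k)) X"
proof (rule cmat_eqI)
  fix x y
  have prod: "X i $ x $ y * X j $ x $ y = (\<Sum>k\<le>d. w * Q i j k * X k $ x $ y)"
    if "i \<le> d" "j \<le> d" for i j
    using arg_cong[OF assms[OF that], of "\<lambda>M. M $ x $ y"]
    by (simp add: schur_nth smat_nth lincomb_nth sum_distrib_left mult.assoc)
  have "schur (lincomb d a X) (lincomb d b X) $ x $ y =
      (\<Sum>i\<le>d. \<Sum>j\<le>d. a i * b j * (X i $ x $ y * X j $ x $ y))"
    unfolding schur_nth lincomb_nth sum_product by (simp add: mult_ac)
  also have "\<dots> = (\<Sum>i\<le>d. \<Sum>j\<le>d. \<Sum>k\<le>d. a i * b j * (w * Q i j k) * X k $ x $ y)"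
    by (intro sum.cong refl) (simp add: prod sum_distrib_left mult_ac)
  also have "\<dots> = (\<Sum>i\<le>d. \<Sum>k\<le>d. \<Sum>j\<le>d. a i * b j * (w * Q i j k) * X k $ x $ y)"
    by (rule sum.cong[OF refl], rule sum.swap)
  also have "\<dots> = (\<Sum>k\<le>d. \<Sum>i\<le>d. \<Sum>j\<le>d. a i * b j * (w * Q i j k) * X k $ x $ y)"
    by (rule sum.swap)
  also have "\<dots> = lincomb d (\<lambda>k. \<Sum>i\<le>d. \<Sum>j\<le>d. a i * b j * (w * Q i j k)) X $ x $ y"
    by (simp add: lincomb_nth sum_distrib_right)
  finally show "schur (lincomb d a X) (lincomb d b X) $ x $ y =
      lincomb d (\<lambda>k. \<Sum>i\<le>d. \<Sum>j\<le>d. a i * b j * (w * Q i j k)) X $ x $ y" .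
qed

section \<open>Systems of orthogonal idempotents\<close>

definition orthogonal_idempotents :: "nat \<Rightarrow> (nat \<Rightarrow> 'v::finite cmat) \<Rightarrow> bool" where
  "orthogonal_idempotents d X \<longleftrightarrow> (\<forall>i\<le>d. \<forall>j\<le>d. X i ** X j = (if i = j then X i else 0))"

context
  fixes d :: nat and X :: "nat \<Rightarrow> 'v::finite cmat"
  assumes orth: "orthogonal_idempotents d X"
begin

lemma lincomb_mult_idempotent:
  assumes "k \<le> d"
  shows "lincomb d a X ** X k = smat (a k) (X k)"
proof (rule cmat_eqI)
  fix x y
  have "a i * (X i ** X k) $ x $ y = (if i = k then a k * X k $ x $ y else 0)" if "i \<in> {..d}" for i
    using orth assms that unfolding orthogonal_idempotents_def by auto
  then show "(lincomb d a X ** X k) $ x $ y = smat (a k) (X k) $ x $ y"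
    using assms by (simp add: lincomb_mult_right lincomb_nth smat_nth)
qed

lemma lincomb_mult_lincomb: "lincomb d a X ** lincomb d b X = lincomb d (\<lambda>j. a j * b j) X"
  unfolding lincomb_mult_left
  by (subst lincomb_cong[OF refl, where Y = "\<lambda>j. smat (a j) (X j)"])
    (simp_all add: lincomb_mult_idempotent lincomb_smat mult.commute)

lemma lincomb_coeff_unique:
  "(\<And>k. k \<le> d \<Longrightarrow> X k \<noteq> 0) \<Longrightarrow> lincomb d a X = lincomb d b X \<Longrightarrow> k \<le> d \<Longrightarrow>
    a k = b k"
  by (metis lincomb_mult_idempotent smat_right_cancel)

end

section \<open>Subfields of the complex numbers and their automorphisms\<close>

lemma subfield_gen_field: "subfield (gen_field S)"
  and gen_field_superset: "S \<subseteq> gen_field S"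
  unfolding gen_field_def subfield_def by auto

lemma gen_field_least: "subfield F \<Longrightarrow> S \<subseteq> F \<Longrightarrow> gen_field S \<subseteq> F"
  unfolding gen_field_def by auto

definition entries_in :: "complex set \<Rightarrow> 'v::finite cmat \<Rightarrow> bool" where
  "entries_in F M \<longleftrightarrow> (\<forall>x y. M $ x $ y \<in> F)"

context
  fixes F :: "complex set"
  assumes F: "subfield F"
begin

lemma subfield_0: "0 \<in> F" and subfield_1: "1 \<in> F"
  and subfield_add: "x \<in> F \<Longrightarrow> y \<in> F \<Longrightarrow> x + y \<in> F"
  and subfield_mult: "x \<in> F \<Longrightarrow> y \<in> F \<Longrightarrow> x * y \<in> F"
  and subfield_uminus: "x \<in> F \<Longrightarrow> - x \<in> F"
  and subfield_inverse: "x \<in> F \<Longrightarrow> inverse x \<in> F"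
  using F unfolding subfield_def by auto

lemma subfield_diff: "x \<in> F \<Longrightarrow> y \<in> F \<Longrightarrow> x - y \<in> F"
  by (metis diff_conv_add_uminus subfield_add subfield_uminus)

lemma subfield_divide: "x \<in> F \<Longrightarrow> y \<in> F \<Longrightarrow> x / y \<in> F"
  by (metis divide_inverse subfield_inverse subfield_mult)

lemma subfield_sum: "(\<And>i. i \<in> S \<Longrightarrow> f i \<in> F) \<Longrightarrow> sum f S \<in> F"
  by (induction S rule: infinite_finite_induct) (auto intro: subfield_0 subfield_add)

lemma subfield_of_nat: "of_nat n \<in> F"
  by (induction n) (auto intro: subfield_0 subfield_1 subfield_add)

lemma entries_in_01: "\<forall>x y. X $ x $ y \<in> {0, 1} \<Longrightarrow> entries_in F X"
  unfolding entries_in_def using subfield_0 subfield_1 by (metis insert_iff singletonD)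

lemma entries_in_mat_1: "entries_in F (mat 1)"
  by (rule entries_in_01) (simp add: mat_def)

lemma entries_in_add: "entries_in F X \<Longrightarrow> entries_in F Y \<Longrightarrow> entries_in F (X + Y)"
  unfolding entries_in_def by (auto intro!: subfield_add)

lemma entries_in_smat: "c \<in> F \<Longrightarrow> entries_in F X \<Longrightarrow> entries_in F (smat c X)"
  unfolding entries_in_def smat_nth by (auto intro!: subfield_mult)

lemma entries_in_mult: "entries_in F X \<Longrightarrow> entries_in F Y \<Longrightarrow> entries_in F (X ** Y)"
  unfolding entries_in_def matrix_mult_nth by (auto intro!: subfield_sum subfield_mult)

lemma entries_in_schur: "entries_in F X \<Longrightarrow> entries_in F Y \<Longrightarrow> entries_in F (schur X Y)"
  unfolding entries_in_def schur_nth by (auto intro!: subfield_mult)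

lemma entries_in_lincomb:
  "(\<And>i. i \<le> d \<Longrightarrow> c i \<in> F) \<Longrightarrow> (\<And>i. i \<le> d \<Longrightarrow> entries_in F (X i)) \<Longrightarrow>
    entries_in F (lincomb d c X)"
  unfolding entries_in_def lincomb_nth by (auto intro!: subfield_sum subfield_mult)

end

context
  fixes F :: "complex set" and \<sigma> :: "complex \<Rightarrow> complex"
  assumes F: "subfield F" and aut: "field_aut F \<sigma>"
begin

lemma aut_inj: "x \<in> F \<Longrightarrow> y \<in> F \<Longrightarrow> \<sigma> x = \<sigma> y \<Longrightarrow> x = y"
  using aut unfolding field_aut_def by (meson bij_betw_imp_inj_on inj_onD)

lemma aut_add: "x \<in> F \<Longrightarrow> y \<in> F \<Longrightarrow> \<sigma> (x + y) = \<sigma> x + \<sigma> y"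
  and aut_mult: "x \<in> F \<Longrightarrow> y \<in> F \<Longrightarrow> \<sigma> (x * y) = \<sigma> x * \<sigma> y"
  and aut_1: "\<sigma> 1 = 1"
  using aut unfolding field_aut_def by auto

lemma aut_0: "\<sigma> 0 = 0"
  using aut_add[OF subfield_0[OF F] subfield_0[OF F]] by simp

lemma aut_uminus: "x \<in> F \<Longrightarrow> \<sigma> (- x) = - \<sigma> x"
  using aut_add[OF _ subfield_uminus[OF F]] aut_0 by (metis add_eq_0_iff ab_left_minus add.commute)

lemma aut_inverse:
  assumes "x \<in> F"
  shows "\<sigma> (inverse x) = inverse (\<sigma> x)"
proof (cases "x = 0")
  case False
  then have "\<sigma> x * \<sigma> (inverse x) = 1"
    using aut_mult[OF assms subfield_inverse[OF F assms]] aut_1 by simp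
  then show ?thesis by (rule inverse_unique[symmetric])
qed (simp add: aut_0)

lemma aut_divide: "x \<in> F \<Longrightarrow> y \<in> F \<Longrightarrow> \<sigma> (x / y) = \<sigma> x / \<sigma> y"
  by (simp add: divide_inverse aut_mult subfield_inverse[OF F] aut_inverse)

lemma aut_sum: "(\<And>i. i \<in> S \<Longrightarrow> f i \<in> F) \<Longrightarrow> \<sigma> (sum f S) = (\<Sum>i\<in>S. \<sigma> (f i))"
  by (induction S rule: infinite_finite_induct) (auto simp: aut_0 aut_add subfield_sum[OF F])

lemma aut_of_nat: "\<sigma> (of_nat n) = of_nat n"
  by (induction n) (auto simp: aut_0 aut_1 aut_add subfield_of_nat[OF F] subfield_1[OF F])

lemma aut_nonzero: "x \<in> F \<Longrightarrow> x \<noteq> 0 \<Longrightarrow> \<sigma> x \<noteq> 0"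
  using aut_inj aut_0 subfield_0[OF F] by metis

lemma subfield_fixed_points: "subfield {x \<in> F. \<sigma> x = x}"
  unfolding subfield_def
  by (auto simp: subfield_0[OF F] subfield_1[OF F] subfield_add[OF F] subfield_mult[OF F]
      subfield_uminus[OF F] subfield_inverse[OF F] aut_0 aut_1 aut_add aut_mult aut_uminus aut_inverse)

lemma aut_fixes_gen_field_iff:
  assumes "S \<subseteq> F"
  shows "(\<forall>x\<in>gen_field S. \<sigma> x = x) \<longleftrightarrow> (\<forall>x\<in>S. \<sigma> x = x)"
proof
  assume "\<forall>x\<in>S. \<sigma> x = x"
  then have "gen_field S \<subseteq> {x \<in> F. \<sigma> x = x}"
    using assms by (intro gen_field_least subfield_fixed_points) auto
  then show "\<forall>x\<in>gen_field S. \<sigma> x = x" by blast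
qed (use gen_field_superset in blast)

lemma entrywise_zero: "entrywise \<sigma> 0 = 0"
  by (intro cmat_eqI) (simp add: entrywise_nth aut_0)

lemma entrywise_01: "\<forall>x y. X $ x $ y \<in> {0, 1} \<Longrightarrow> entrywise \<sigma> X = X"
  by (intro cmat_eqI) (metis aut_0 aut_1 entrywise_nth insert_iff singletonD)

lemma entrywise_mult:
  "entries_in F X \<Longrightarrow> entries_in F Y \<Longrightarrow>
    entrywise \<sigma> (X ** Y) = entrywise \<sigma> X ** entrywise \<sigma> Y"
  unfolding entries_in_def
  by (intro cmat_eqI) (simp add: entrywise_nth matrix_mult_nth aut_sum subfield_mult[OF F] aut_mult)

lemma entrywise_smat:
  "c \<in> F \<Longrightarrow> entries_in F X \<Longrightarrow> entrywise \<sigma> (smat c X) = smat (\<sigma> c) (entrywise \<sigma> X)"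
  unfolding entries_in_def by (intro cmat_eqI) (simp add: entrywise_nth smat_nth aut_mult)

lemma entrywise_schur:
  "entries_in F X \<Longrightarrow> entries_in F Y \<Longrightarrow>
    entrywise \<sigma> (schur X Y) = schur (entrywise \<sigma> X) (entrywise \<sigma> Y)"
  unfolding entries_in_def by (intro cmat_eqI) (simp add: entrywise_nth schur_nth aut_mult)

lemma entrywise_lincomb:
  assumes "\<And>i. i \<le> d \<Longrightarrow> c i \<in> F" and "\<And>i. i \<le> d \<Longrightarrow> entries_in F (X i)"
  shows "entrywise \<sigma> (lincomb d c X) = lincomb d (\<lambda>i. \<sigma> (c i)) (\<lambda>i. entrywise \<sigma> (X i))"
proof (rule cmat_eqI)
  fix x y
  have in_F: "c i * X i $ x $ y \<in> F" if "i \<in> {..d}" for i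
    using assms that unfolding entries_in_def by (auto simp: subfield_mult[OF F])
  have "\<sigma> (\<Sum>i\<le>d. c i * X i $ x $ y) = (\<Sum>i\<le>d. \<sigma> (c i) * \<sigma> (X i $ x $ y))"
    using assms in_F aut_sum[where S = "{..d}" and f = "\<lambda>i. c i * X i $ x $ y"]
    unfolding entries_in_def by (simp add: aut_mult)
  then show "entrywise \<sigma> (lincomb d c X) $ x $ y =
      lincomb d (\<lambda>i. \<sigma> (c i)) (\<lambda>i. entrywise \<sigma> (X i)) $ x $ y"
    by (simp add: entrywise_nth lincomb_nth)
qed

end

section \<open>Bose-Mesner algebras over a subfield containing the eigenvalues\<close>

locale bose_mesner =
  fixes d :: nat and A E :: "nat \<Rightarrow> 'v::finite cmat"
    and p :: "nat \<Rightarrow> nat \<Rightarrow> complex" and q :: "nat \<Rightarrow> nat \<Rightarrow> nat \<Rightarrow> complex"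
    and L :: "complex set"
  assumes scheme: "assoc_scheme d A"
    and idem: "principal_idempotents d A E"
    and eig: "\<forall>i\<le>d. \<forall>j\<le>d. A i ** E j = smat (p i j) (E j)"
    and krein: "\<forall>i\<le>d. \<forall>j\<le>d. schur (E i) (E j) = smat (1 / of_nat CARD('v)) (lincomb d (q i j) E)"
    and L: "subfield L"
    and eigenvalue_in_L: "\<And>i j. i \<le> d \<Longrightarrow> j \<le> d \<Longrightarrow> p i j \<in> L"
begin

lemma orthogonal_E: "orthogonal_idempotents d E"
  using idem unfolding principal_idempotents_def orthogonal_idempotents_def by auto

lemma E_hermitian: "j \<le> d \<Longrightarrow> ctrans (E j) = E j"
  using idem unfolding principal_idempotents_def by auto

lemma E_nonzero: "j \<le> d \<Longrightarrow> E j \<noteq> 0"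
proof
  assume "j \<le> d" and "E j = 0"
  then have "lincomb d (\<lambda>i. if i = j then 1 else 0) E = 0" by (simp add: lincomb_indicator)
  then have "(\<lambda>i. if i = j then 1 else 0 :: complex) j = 0"
    using idem \<open>j \<le> d\<close> unfolding principal_idempotents_def by blast
  then show False by simp
qed

lemma sum_E: "lincomb d (\<lambda>_. 1) E = mat 1"
  using idem unfolding principal_idempotents_def by (simp add: sum_eq_lincomb_1)

lemma E_coeff_unique: "lincomb d a E = lincomb d b E \<Longrightarrow> k \<le> d \<Longrightarrow> a k = b k"
  using lincomb_coeff_unique[OF orthogonal_E] E_nonzero by blast

lemma A_01: "i \<le> d \<Longrightarrow> \<forall>x y. A i $ x $ y \<in> {0, 1}"
  using scheme unfolding assoc_scheme_def by auto

lemma A_eq_eigenvalues: "i \<le> d \<Longrightarrow> A i = lincomb d (p i) E"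
proof -
  assume "i \<le> d"
  then have "A i ** lincomb d (\<lambda>_. 1) E = lincomb d (\<lambda>_. 1) (\<lambda>j. smat (p i j) (E j))"
    using eig by (simp add: lincomb_mult_left cong: lincomb_cong)
  then show ?thesis by (simp add: sum_E lincomb_smat)
qed

lemma eigenvalue_columns_distinct:
  assumes k: "k \<le> d" "k' \<le> d" and same: "\<And>i. i \<le> d \<Longrightarrow> p i k = p i k'"
  shows "k = k'"
proof (rule ccontr)
  assume ne: "k \<noteq> k'"
  obtain c where c: "E k = lincomb d c A"
    using idem k unfolding principal_idempotents_def by blast
  have E_k_mult: "E k ** E m = smat (\<Sum>i\<le>d. c i * p i m) (E m)" if "m \<le> d" for m
    unfolding c by (rule lincomb_mult_eigen) (use eig that in auto)
  have "smat (\<Sum>i\<le>d. c i * p i k) (E k) = smat 1 (E k)"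
    using E_k_mult[OF k(1)] orthogonal_E k by (simp add: orthogonal_idempotents_def smat_1)
  then have "(\<Sum>i\<le>d. c i * p i k) = 1"
    using smat_right_cancel E_nonzero[OF k(1)] by blast
  then have "(\<Sum>i\<le>d. c i * p i k') = 1"
    using same by (metis (no_types, lifting) atMost_iff sum.cong)
  moreover have "E k ** E k' = 0"
    using orthogonal_E k ne unfolding orthogonal_idempotents_def by auto
  ultimately show False
    using E_k_mult[OF k(2)] E_nonzero[OF k(2)] by (simp add: smat_1)
qed

text \<open>Multiplying by (A_i - p_i(k) I) / (p_i(j) - p_i(k)), with i chosen so that
  p_i(j) \<noteq> p_i(k), kills the E_k-coefficient and keeps the E_j-coefficient.\<close>

lemma isolating_matrix_in_L:
  assumes "finite S" "S \<subseteq> {..d} - {j}" "j \<le> d"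
  shows "\<exists>X f. entries_in L X \<and> X = lincomb d f E \<and> f j = 1 \<and> (\<forall>l\<in>S. f l = 0)"
  using assms
proof (induction S rule: finite_induct)
  case empty
  show ?case
    by (intro exI[of _ "mat 1"] exI[of _ "\<lambda>_. 1"]) (simp add: entries_in_mat_1[OF L] sum_E)
next
  case (insert k S)
  then obtain X f where X: "entries_in L X" "X = lincomb d f E" "f j = 1" "\<forall>l\<in>S. f l = 0"
    by auto
  have k: "k \<le> d" "k \<noteq> j" using insert by auto
  obtain i where i: "i \<le> d" "p i j \<noteq> p i k"
    using eigenvalue_columns_distinct[OF insert(5) k(1)] k(2) by metis
  define r where "r = 1 / (p i j - p i k)"
  define s where "s = - p i k / (p i j - p i k)"
  define M where "M = smat r (A i) + smat s (mat 1)"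
  have rs: "r \<in> L" "s \<in> L"
    unfolding r_def s_def using eigenvalue_in_L i insert(5) k(1)
    by (auto intro!: subfield_divide[OF L] subfield_diff[OF L] subfield_uminus[OF L] subfield_1[OF L])
  have M_in_L: "entries_in L M"
    unfolding M_def by (intro entries_in_add[OF L] entries_in_smat[OF L] rs
        entries_in_mat_1[OF L] entries_in_01[OF L] A_01 i)
  have "M ** E l = smat (r * p i l + s) (E l)" if "l \<le> d" for l
    unfolding M_def smat_add_mult using eig i that by (simp add: smat_smat smat_add_left)
  then have "M ** X = lincomb d (\<lambda>l. f l * (r * p i l + s)) E"
    by (simp add: X(2) lincomb_mult_left lincomb_smat cong: lincomb_cong)
  moreover have "r * p i j + s = 1" "r * p i k + s = 0"
    using i unfolding r_def s_def by (simp_all add: divide_simps)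
  ultimately show ?case
    using entries_in_mult[OF L M_in_L X(1)] X by (intro exI[of _ "M ** X"]) auto
qed

lemma E_in_L:
  assumes "j \<le> d"
  shows "entries_in L (E j)"
proof -
  obtain X f where X: "entries_in L X" "X = lincomb d f E" "f j = 1" "\<forall>l\<in>{..d} - {j}. f l = 0"
    using isolating_matrix_in_L[of "{..d} - {j}" j] assms by auto
  have "X = E j"
    unfolding X(2) lincomb_indicator[OF assms, symmetric] by (rule lincomb_cong) (use X in auto)
  then show ?thesis using X(1) by simp
qed

lemma E_coeff_in_L:
  assumes "entries_in L M" "M = lincomb d a E" "k \<le> d"
  shows "a k \<in> L"
proof -
  obtain x y where xy: "E k $ x $ y \<noteq> 0" using cmat_nonzero_entry E_nonzero[OF assms(3)] by blast
  have "a k = (M ** E k) $ x $ y / E k $ x $ y"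
    using assms(2) lincomb_mult_idempotent[OF orthogonal_E assms(3)] xy by (simp add: smat_nth)
  then show ?thesis
    using entries_in_mult[OF L assms(1) E_in_L[OF assms(3)]] E_in_L[OF assms(3)]
    unfolding entries_in_def by (simp add: subfield_divide[OF L])
qed

lemma krein_in_L: "i \<le> d \<Longrightarrow> j \<le> d \<Longrightarrow> k \<le> d \<Longrightarrow> q i j k \<in> L"
proof -
  assume ijk: "i \<le> d" "j \<le> d" "k \<le> d"
  have "schur (E i) (E j) = lincomb d (\<lambda>k. 1 / of_nat CARD('v) * q i j k) E"
    using krein ijk by (simp add: smat_lincomb)
  then have "1 / of_nat CARD('v) * q i j k \<in> L"
    using E_coeff_in_L[OF entries_in_schur[OF L E_in_L E_in_L]] ijk by blast
  then show ?thesis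
    using subfield_mult[OF L subfield_of_nat[OF L], of _ "CARD('v)"] by fastforce
qed

text \<open>The A_i are 0/1 matrices with disjoint supports (they sum to J), so the
  coefficients of E_j in the basis A are entries of E_j.\<close>

lemma A_disjoint_support:
  assumes "i \<le> d" "i' \<le> d" "i' \<noteq> i" "A i $ x $ y \<noteq> 0"
  shows "A i' $ x $ y = 0"
proof (rule ccontr)
  assume "A i' $ x $ y \<noteq> 0"
  then have one: "A i $ x $ y = 1" "A i' $ x $ y = 1" using A_01 assms by auto
  have nonneg: "0 \<le> Re (A m $ x $ y)" if "m \<in> {..d}" for m
  proof -
    have "A m $ x $ y \<in> {0, 1}" using A_01 that by simp
    then show ?thesis by auto
  qed
  have "(\<Sum>m\<in>{i,i'}. Re (A m $ x $ y)) \<le> (\<Sum>m\<le>d. Re (A m $ x $ y))"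
    by (rule sum_mono2) (use assms nonneg in auto)
  also have "\<dots> = Re ((\<Sum>m\<le>d. A m) $ x $ y)" by simp
  also have "\<dots> = 1" using scheme unfolding assoc_scheme_def Jmat_def by simp
  finally show False using one assms(3) by simp
qed

lemma E_in_L_span_A: "j \<le> d \<Longrightarrow> \<exists>c. (\<forall>i\<le>d. c i \<in> L) \<and> E j = lincomb d c A"
proof -
  assume j: "j \<le> d"
  obtain c where c: "E j = lincomb d c A" using idem j unfolding principal_idempotents_def by blast
  have "c i \<in> L" if i: "i \<le> d" for i
  proof -
    have "A i \<noteq> 0" using scheme i unfolding assoc_scheme_def by auto
    then obtain x y where xy: "A i $ x $ y \<noteq> 0" by (rule cmat_nonzero_entry)
    then have "A i $ x $ y = 1" using A_01 i by auto
    moreover have "c m * A m $ x $ y = (if m = i then c i else 0)" if "m \<in> {..d}" for m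
      using A_disjoint_support[OF i _ _ xy] that calculation by auto
    ultimately have "E j $ x $ y = c i"
      using c i by (simp add: lincomb_nth)
    then show ?thesis using E_in_L[OF j] unfolding entries_in_def by metis
  qed
  then show ?thesis using c by blast
qed

lemma Lspan_eq_E_span: "Lspan L d A = {lincomb d a E | a. \<forall>j\<le>d. a j \<in> L}"
proof (intro set_eqI iffI)
  fix M assume "M \<in> Lspan L d A"
  then obtain c where c: "\<forall>i\<le>d. c i \<in> L" "M = lincomb d c A" unfolding Lspan_def by blast
  have "M = lincomb d c (\<lambda>i. lincomb d (p i) E)"
    unfolding c(2) by (rule lincomb_cong) (simp_all add: A_eq_eigenvalues)
  then have "M = lincomb d (\<lambda>k. \<Sum>i\<le>d. c i * p i k) E"
    by (simp only: lincomb_lincomb)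
  moreover have "(\<Sum>i\<le>d. c i * p i k) \<in> L" if "k \<le> d" for k
    using c(1) eigenvalue_in_L that by (intro subfield_sum[OF L] subfield_mult[OF L]) auto
  ultimately show "M \<in> {lincomb d a E | a. \<forall>j\<le>d. a j \<in> L}" by blast
next
  fix M assume "M \<in> {lincomb d a E | a. \<forall>j\<le>d. a j \<in> L}"
  then obtain a where a: "\<forall>j\<le>d. a j \<in> L" "M = lincomb d a E" by blast
  obtain C where C: "\<And>j. j \<le> d \<Longrightarrow> (\<forall>i\<le>d. C j i \<in> L) \<and> E j = lincomb d (C j) A"
    using E_in_L_span_A by metis
  have "M = lincomb d a (\<lambda>j. lincomb d (C j) A)"
    unfolding a(2) using C by (intro lincomb_cong) simp_all
  then have "M = lincomb d (\<lambda>k. \<Sum>j\<le>d. a j * C j k) A"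
    by (simp only: lincomb_lincomb)
  moreover have "(\<Sum>j\<le>d. a j * C j k) \<in> L" if "k \<le> d" for k
    using a(1) C that by (intro subfield_sum[OF L] subfield_mult[OF L]) simp_all
  ultimately show "M \<in> Lspan L d A"
    unfolding Lspan_def by (intro CollectI exI[of _ "\<lambda>k. \<Sum>j\<le>d. a j * C j k"]) simp
qed

lemma E_in_Lspan: "j \<le> d \<Longrightarrow> E j \<in> Lspan L d A"
  unfolding Lspan_eq_E_span
  by (intro CollectI exI[of _ "\<lambda>i. if i = j then 1 else 0"] conjI)
    (simp_all add: lincomb_indicator subfield_0[OF L] subfield_1[OF L])

lemma coeffs_lincomb: "coeffs d E (lincomb d a E) = (\<lambda>j. if j \<le> d then a j else 0)"
  unfolding coeffs_def
proof (rule the_equality)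
  fix b assume b: "(\<forall>j>d. b j = 0) \<and> lincomb d a E = lincomb d b E"
  show "b = (\<lambda>j. if j \<le> d then a j else 0)"
  proof
    fix j
    show "b j = (if j \<le> d then a j else 0)"
      using b E_coeff_unique[of a b j] by (cases "j \<le> d") auto
  qed
qed (auto intro: lincomb_cong)

end

section \<open>The conjugate idempotents E_j^\<sigma>\<close>

locale bose_mesner_galois = bose_mesner d A E p q L
  for d A and E :: "nat \<Rightarrow> 'v::finite cmat" and p q L +
  fixes \<sigma> :: "complex \<Rightarrow> complex"
  assumes aut: "field_aut L \<sigma>"
begin

definition E_conj where
  "E_conj j = entrywise \<sigma> (E j)"

lemma hat_lincomb: "hat \<sigma> d E (lincomb d a E) = lincomb d a E_conj"
  unfolding hat_def coeffs_lincomb by (simp add: lincomb_def E_conj_def)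

lemma orthogonal_E_conj: "orthogonal_idempotents d E_conj"
  using orthogonal_E
  by (auto simp: orthogonal_idempotents_def E_conj_def E_in_L entrywise_zero[OF L aut]
      simp flip: entrywise_mult[OF L aut])

lemma E_conj_nonzero: "j \<le> d \<Longrightarrow> E_conj j \<noteq> 0"
  using aut_nonzero[OF L aut] E_in_L cmat_nonzero_entry[OF E_nonzero]
  by (metis E_conj_def entries_in_def entrywise_nth zero_index)

lemma E_conj_coeff_unique: "lincomb d a E_conj = lincomb d b E_conj \<Longrightarrow> k \<le> d \<Longrightarrow> a k = b k"
  using lincomb_coeff_unique[OF orthogonal_E_conj] E_conj_nonzero by blast

lemma A_mult_E_conj: "i \<le> d \<Longrightarrow> j \<le> d \<Longrightarrow> A i ** E_conj j = smat (\<sigma> (p i j)) (E_conj j)"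
  using eig entrywise_01[OF L aut A_01] entrywise_mult[OF L aut entries_in_01[OF L A_01] E_in_L]
    entrywise_smat[OF L aut eigenvalue_in_L E_in_L]
  by (simp add: E_conj_def)

lemma E_conj_in_E_span: "j \<le> d \<Longrightarrow> \<exists>f. E_conj j = lincomb d f E"
proof -
  assume j: "j \<le> d"
  obtain c where c: "\<forall>i\<le>d. c i \<in> L" "E j = lincomb d c A" using E_in_L_span_A[OF j] by blast
  have "E_conj j = lincomb d (\<lambda>i. \<sigma> (c i)) (\<lambda>i. entrywise \<sigma> (A i))"
    unfolding E_conj_def c(2)
    by (rule entrywise_lincomb[OF L aut]) (use c entries_in_01[OF L A_01] in auto)
  also have "\<dots> = lincomb d (\<lambda>i. \<sigma> (c i)) (\<lambda>i. lincomb d (p i) E)"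
    using entrywise_01[OF L aut A_01] A_eq_eigenvalues by (intro lincomb_cong) metis+
  also have "\<dots> = lincomb d (\<lambda>k. \<Sum>i\<le>d. \<sigma> (c i) * p i k) E"
    by (rule lincomb_lincomb)
  finally show ?thesis by blast
qed

text \<open>E_j^\<sigma> is a nonzero idempotent on which every A_i acts as a scalar; in the basis E
  only one coefficient can survive, since distinct E_k have distinct eigenvalue columns.\<close>

lemma E_conj_is_E: "j \<le> d \<Longrightarrow> \<exists>k\<le>d. E_conj j = E k"
proof -
  assume j: "j \<le> d"
  obtain f where f: "E_conj j = lincomb d f E" using E_conj_in_E_span[OF j] by blast
  have eigen_coeff: "f l * p i l = \<sigma> (p i j) * f l" if "i \<le> d" "l \<le> d" for i l
  proof -
    have "lincomb d (\<lambda>l. f l * p i l) E = A i ** E_conj j"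
      using eig that by (simp add: f lincomb_mult_left lincomb_smat cong: lincomb_cong)
    also have "\<dots> = lincomb d (\<lambda>l. \<sigma> (p i j) * f l) E"
      using A_mult_E_conj[OF that(1) j] f by (simp add: smat_lincomb)
    finally show ?thesis using E_coeff_unique that(2) by blast
  qed
  obtain k where k: "k \<le> d" "f k \<noteq> 0"
    using E_conj_nonzero[OF j] lincomb_zero unfolding f by (metis lincomb_cong)
  have f_zero: "f l = 0" if "l \<le> d" "l \<noteq> k" for l
  proof (rule ccontr)
    assume "f l \<noteq> 0"
    then have "p i l = p i k" if "i \<le> d" for i
      using eigen_coeff[OF that \<open>l \<le> d\<close>] eigen_coeff[OF that k(1)] k(2)
      by (metis mult.commute mult_left_cancel)
    then show False using eigenvalue_columns_distinct[OF \<open>l \<le> d\<close> k(1)] \<open>l \<noteq> k\<close> by blast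
  qed
  have "E_conj j = lincomb d (\<lambda>l. f k * (if l = k then 1 else 0)) E"
    unfolding f by (rule lincomb_cong) (use f_zero in auto)
  then have f_eq: "E_conj j = smat (f k) (E k)"
    by (simp only: smat_lincomb[symmetric] lincomb_indicator[OF k(1)])
  have "E_conj j ** E_conj j = E_conj j"
    using orthogonal_E_conj j unfolding orthogonal_idempotents_def by auto
  then have "f k * f k = f k"
    using E_coeff_unique k(1) unfolding f lincomb_mult_lincomb[OF orthogonal_E] by blast
  then show ?thesis using f_eq k by (auto simp: smat_1)
qed

definition galois_perm :: "nat \<Rightarrow> nat" where
  "galois_perm j = (SOME k. k \<le> d \<and> E_conj j = E k)"

lemma galois_perm: "j \<le> d \<Longrightarrow> galois_perm j \<le> d \<and> E_conj j = E (galois_perm j)"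
  unfolding galois_perm_def using E_conj_is_E by (rule someI_ex) blast

lemma bij_galois_perm: "bij_betw galois_perm {..d} {..d}"
proof -
  have "inj_on galois_perm {..d}"
  proof (rule inj_onI, rule ccontr)
    fix i j assume ij: "i \<in> {..d}" "j \<in> {..d}" "galois_perm i = galois_perm j" "i \<noteq> j"
    then have "E_conj i ** E_conj j = 0"
      using orthogonal_E_conj unfolding orthogonal_idempotents_def by auto
    moreover have "E_conj i ** E_conj j = E_conj i"
      using galois_perm ij orthogonal_E unfolding orthogonal_idempotents_def by auto
    ultimately show False using E_conj_nonzero ij by auto
  qed
  moreover have "galois_perm ` {..d} \<subseteq> {..d}" using galois_perm by auto
  ultimately show ?thesis unfolding bij_betw_def using endo_inj_surj[OF finite_atMost] by blast
qed

lemma lincomb_E_conj_reindex: "lincomb d (\<lambda>j. b (galois_perm j)) E_conj = lincomb d b E"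
proof -
  have "lincomb d (\<lambda>j. b (galois_perm j)) E_conj =
      (\<Sum>j\<le>d. smat (b (galois_perm j)) (E (galois_perm j)))"
    unfolding lincomb_def using galois_perm by (intro sum.cong) auto
  also have "\<dots> = lincomb d b E"
    unfolding lincomb_def by (rule sum.reindex_bij_betw[OF bij_galois_perm])
  finally show ?thesis .
qed

lemma E_conj_span:
  "{lincomb d a E_conj | a. \<forall>j\<le>d. a j \<in> L} = {lincomb d a E | a. \<forall>j\<le>d. a j \<in> L}"
proof (intro set_eqI iffI)
  fix M assume "M \<in> {lincomb d a E_conj | a. \<forall>j\<le>d. a j \<in> L}"
  then obtain a where a: "\<forall>j\<le>d. a j \<in> L" "M = lincomb d a E_conj" by blast
  define b where "b = a \<circ> inv_into {..d} galois_perm"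
  have "M = lincomb d (\<lambda>j. b (galois_perm j)) E_conj"
    using bij_galois_perm unfolding a(2) b_def
    by (intro lincomb_cong) (auto simp: bij_betw_def inv_into_f_f)
  moreover have "\<forall>k\<le>d. b k \<in> L"
    using a(1) bij_betw_inv_into[OF bij_galois_perm] unfolding b_def
    by (auto dest: bij_betwE)
  ultimately show "M \<in> {lincomb d a E | a. \<forall>j\<le>d. a j \<in> L}"
    unfolding lincomb_E_conj_reindex by blast
next
  fix M assume "M \<in> {lincomb d a E | a. \<forall>j\<le>d. a j \<in> L}"
  then obtain b where "\<forall>j\<le>d. b j \<in> L" "M = lincomb d b E" by blast
  then show "M \<in> {lincomb d a E_conj | a. \<forall>j\<le>d. a j \<in> L}"
    using galois_perm by (auto simp flip: lincomb_E_conj_reindex)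
qed

lemma E_conj_hermitian: "j \<le> d \<Longrightarrow> ctrans (E_conj j) = E_conj j"
  using galois_perm E_hermitian by metis

lemma E_conj_krein:
  assumes "i \<le> d" "j \<le> d"
  shows "schur (E_conj i) (E_conj j) =
    smat (1 / of_nat CARD('v)) (lincomb d (\<lambda>k. \<sigma> (q i j k)) E_conj)"
proof -
  have v: "1 / of_nat CARD('v) \<in> L" "\<sigma> (1 / of_nat CARD('v)) = 1 / of_nat CARD('v)"
    by (simp_all add: subfield_divide[OF L] subfield_1[OF L] subfield_of_nat[OF L]
        aut_divide[OF L aut] aut_1[OF L aut] aut_of_nat[OF L aut])
  have "schur (E_conj i) (E_conj j) = entrywise \<sigma> (schur (E i) (E j))"
    by (simp add: E_conj_def entrywise_schur[OF L aut] E_in_L assms)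
  also have "\<dots> = entrywise \<sigma> (smat (1 / of_nat CARD('v)) (lincomb d (q i j) E))"
    using krein assms by simp
  also have "\<dots> = smat (1 / of_nat CARD('v)) (lincomb d (\<lambda>k. \<sigma> (q i j k)) E_conj)"
    using assms krein_in_L E_in_L v
    by (simp add: entrywise_smat[OF L aut] entries_in_lincomb[OF L] entrywise_lincomb[OF L aut]
        E_conj_def[abs_def])
  finally show ?thesis .
qed

lemma hat_BM_aut_imp_krein_fixed:
  assumes BM: "BM_aut L (Lspan L d A) (hat \<sigma> d E)" and ijk: "i \<le> d" "j \<le> d" "k \<le> d"
  shows "\<sigma> (q i j k) = q i j k"
proof -
  have hat_E: "hat \<sigma> d E (E m) = E_conj m" if "m \<le> d" for m
    using hat_lincomb[of "\<lambda>l. if l = m then 1 else 0"] lincomb_indicator[OF that] by metis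
  have "hat \<sigma> d E (schur (E i) (E j)) = schur (E_conj i) (E_conj j)"
    using BM E_in_Lspan ijk hat_E unfolding BM_aut_def by metis
  then have "lincomb d (\<lambda>k. 1 / of_nat CARD('v) * q i j k) E_conj =
      lincomb d (\<lambda>k. 1 / of_nat CARD('v) * \<sigma> (q i j k)) E_conj"
    using krein ijk E_conj_krein by (simp add: smat_lincomb hat_lincomb)
  then show ?thesis using E_conj_coeff_unique ijk(3) by fastforce
qed

lemma hat_BM_aut_if_krein_fixed:
  assumes fixed: "\<forall>i\<le>d. \<forall>j\<le>d. \<forall>k\<le>d. \<sigma> (q i j k) = q i j k"
  shows "BM_aut L (Lspan L d A) (hat \<sigma> d E)"
proof -
  define S where "S = {lincomb d a E | a. \<forall>j\<le>d. a j \<in> L}"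
  let ?h = "hat \<sigma> d E"
  have E_conj_krein_fixed:
    "schur (E_conj i) (E_conj j) = smat (1 / of_nat CARD('v)) (lincomb d (q i j) E_conj)"
    if "i \<le> d" "j \<le> d" for i j
    using E_conj_krein[OF that] fixed that by (simp cong: lincomb_cong)
  have "inj_on ?h S"
  proof (rule inj_onI)
    fix M N assume "M \<in> S" "N \<in> S" and eq: "?h M = ?h N"
    then obtain a b where ab: "M = lincomb d a E" "N = lincomb d b E" unfolding S_def by blast
    then have "a k = b k" if "k \<le> d" for k
      using eq E_conj_coeff_unique that by (simp add: hat_lincomb)
    then show "M = N" unfolding ab by (intro lincomb_cong) auto
  qed
  moreover have "?h ` S = {lincomb d a E_conj | a. \<forall>j\<le>d. a j \<in> L}"
    unfolding S_def setcompr_eq_image image_image hat_lincomb ..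
  then have "?h ` S = S"
    unfolding S_def E_conj_span .
  moreover have
    "?h (M + N) = ?h M + ?h N" "?h (M ** N) = ?h M ** ?h N"
    "?h (schur M N) = schur (?h M) (?h N)" "?h (ctrans M) = ctrans (?h M)"
    "?h (smat c M) = smat c (?h M)"
    if MN: "M \<in> S" "N \<in> S" for M N c
  proof -
    obtain a b where "M = lincomb d a E" "N = lincomb d b E" using MN unfolding S_def by blast
    then show
      "?h (M + N) = ?h M + ?h N" "?h (M ** N) = ?h M ** ?h N"
      "?h (schur M N) = schur (?h M) (?h N)" "?h (ctrans M) = ctrans (?h M)"
      "?h (smat c M) = smat c (?h M)"
      by (simp_all add: hat_lincomb lincomb_add smat_lincomb
          lincomb_mult_lincomb[OF orthogonal_E] lincomb_mult_lincomb[OF orthogonal_E_conj]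
          ctrans_lincomb[OF E_hermitian] ctrans_lincomb[OF E_conj_hermitian]
          schur_lincomb[where X = E and Q = q, OF krein[rule_format]]
          schur_lincomb[where X = E_conj and Q = q, OF E_conj_krein_fixed])
  qed
  ultimately show ?thesis
    unfolding BM_aut_def Lspan_eq_E_span S_def[symmetric] bij_betw_def by blast
qed

lemma hat_BM_aut_iff:
  "BM_aut L (Lspan L d A) (hat \<sigma> d E) \<longleftrightarrow>
    (\<forall>i\<le>d. \<forall>j\<le>d. \<forall>k\<le>d. \<sigma> (q i j k) = q i j k)"
  using hat_BM_aut_imp_krein_fixed hat_BM_aut_if_krein_fixed by blast

end

theorem theorem4p2:
  fixes d :: nat
    and A E :: "nat \<Rightarrow> complex^'v::finite^'v"
    and p :: "nat \<Rightarrow> nat \<Rightarrow> complex"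
    and q :: "nat \<Rightarrow> nat \<Rightarrow> nat \<Rightarrow> complex"
    and \<sigma> :: "complex \<Rightarrow> complex"
  assumes scheme: "assoc_scheme d A"
    and idem: "principal_idempotents d A E"
    and eig: "\<forall>i\<le>d. \<forall>j\<le>d. A i ** E j = smat (p i j) (E j)"
    and krein: "\<forall>i\<le>d. \<forall>j\<le>d.
                  schur (E i) (E j) = smat (1 / of_nat CARD('v)) (lincomb d (q i j) E)"
    and gal: "field_aut (gen_field {p i j |i j. i \<le> d \<and> j \<le> d}) \<sigma>"
  shows "BM_aut (gen_field {p i j |i j. i \<le> d \<and> j \<le> d})
                (Lspan (gen_field {p i j |i j. i \<le> d \<and> j \<le> d}) d A)
                (hat \<sigma> d E)
         \<longleftrightarrow> (\<forall>x\<in>gen_field {q i j k |i j k. i \<le> d \<and> j \<le> d \<and> k \<le> d}. \<sigma> x = x)"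
proof -
  let ?L = "gen_field {p i j |i j. i \<le> d \<and> j \<le> d}"
  let ?Q = "{q i j k |i j k. i \<le> d \<and> j \<le> d \<and> k \<le> d}"
  have p_in_L: "p i j \<in> ?L" if "i \<le> d" "j \<le> d" for i j
    using gen_field_superset[of "{p i j |i j. i \<le> d \<and> j \<le> d}"] that by blast
  interpret bose_mesner_galois d A E p q ?L \<sigma>
    by (rule bose_mesner_galois.intro[OF bose_mesner.intro bose_mesner_galois_axioms.intro])
      (fact scheme idem eig krein subfield_gen_field p_in_L gal)+
  have "?Q \<subseteq> ?L" using krein_in_L by blast
  then have "(\<forall>x\<in>gen_field ?Q. \<sigma> x = x) \<longleftrightarrow> (\<forall>x\<in>?Q. \<sigma> x = x)"
    by (rule aut_fixes_gen_field_iff[OF subfield_gen_field gal])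
  also have "\<dots> \<longleftrightarrow> (\<forall>i\<le>d. \<forall>j\<le>d. \<forall>k\<le>d. \<sigma> (q i j k) = q i j k)"
    by blast
  finally show ?thesis by (simp only: hat_BM_aut_iff)
qed

end
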